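(* Let $F_1,F_2:X\rightrightarrows Y$ be upper $K$-convex set-valued maps whose values are all $K$-sequentially compact. Suppose that $F_1$ (or $F_2$) is continuous at some point of $X$, or that $X$ is finite dimensional. Then for every $\bar x\in X$ and every $y^*\in K^+\setminus\{0\}$, $$y^*\big(\widehat\partial(F_1+F_2)(\bar x)\big)\subset\widehat\partial(y^*\circ F_1)(\bar x)+\widehat\partial(y^*\circ F_2)(\bar x).$$
   Context: $X,Y$ are real normed spaces with duals $X^*,Y^*$; $B(X,Y)$ is the space of bounded linear operators $X\to Y$; $B(x,\delta)$ is the open ball and $D_Y$ the closed unit ball. $K\subset Y$ is a pointed closed convex cone and $K^+=\{y^*\in Y^*: y^*(k)\ge0\ \forall k\in K\}$. All set-valued maps have nonempty values; $(F_1+F_2)(x)=F_1(x)+F_2(x)$. For $F:X\rightrightarrows Y$ and $\bar x\in X$, $\widehat\partial F(\bar x)$ is the set of all $T\in B(X,Y)$ such that for every $\varepsilon>0$ there is $\delta>0$ with $F(x)+K\subset F(\bar x)+K+T(x-\bar x)+\varepsilon\|x-\bar x\|D_Y$ for all $x\in B(\bar x,\delta)$; this is also applied to maps $G:X\rightrightarrows\mathbb R$ with $Y=\mathbb R$, $K=[0,\infty)$ (so $\widehat\partial G(\bar x)\subset X^*$). For $y^*\in Y^*$, $y^*\circ F$ is $x\mapsto\{y^*(y):y\in F(x)\}$, and for $\mathcal T\subset B(X,Y)$, $y^*(\mathcal T)=\{y^*\circ T:T\in\mathcal T\}$. $F$ is upper $K$-convex if $\lambda F(x)+(1-\lambda)F(y)\subset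 F(\lambda x+(1-\lambda)y)+K$ for all $x,y\in X$, $\lambda\in(0,1)$. A nonempty $A\subset Y$ is $K$-sequentially compact if for every $(a_n)\subset A$ there is $(c_n)\subset K$ such that $(a_n-c_n)$ has a subsequence converging to an element of $A$. $F$ is continuous at $x$ if it is both lower continuous (for every open $V$ with $F(x)\cap V\ne\emptyset$ there is a neighborhood $U$ of $x$ with $F(u)\cap V\neq\emptyset$ for $u\in U$) and upper continuous (for every open $V\supset F(x)$ there is a neighborhood $U$ of $x$ with $F(u)\subset V$ for $u\in U$) at $x$. *)

theory Defs
  imports "HOL-Analysis.Analysis"
begin

definition pointed_closed_convex_cone :: "'b::real_normed_vector set \<Rightarrow> bool" where
  "pointed_closed_convex_cone K \<longleftrightarrow> closed K \<and> convex K \<and> cone K \<and> K \<inter> uminus ` K = {0}"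

definition dual_cone :: "'b::real_normed_vector set \<Rightarrow> ('b \<Rightarrow> real) set" where
  "dual_cone K = {ys. bounded_linear ys \<and> (\<forall>k\<in>K. ys k \<ge> 0)}"

(* Frechet-type subdifferential of a set-valued map w.r.t. the cone K *)
definition subdiff :: "'b::real_normed_vector set \<Rightarrow> ('a::real_normed_vector \<Rightarrow> 'b set) \<Rightarrow> 'a \<Rightarrow> ('a \<Rightarrow> 'b) set" where
  "subdiff K F xb = {T. bounded_linear T \<and>
     (\<forall>\<epsilon>>0. \<exists>\<delta>>0. \<forall>x\<in>ball xb \<delta>.
        {a + k | a k. a \<in> F x \<and> k \<in> K} \<subseteq>
        {b + k + T (x - xb) + d | b k d. b \<in> F xb \<and> k \<in> K \<and> norm d \<le> \<epsilon> * norm (x - xb)})}"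

definition scal_comp :: "('b \<Rightarrow> real) \<Rightarrow> ('a \<Rightarrow> 'b set) \<Rightarrow> 'a \<Rightarrow> real set" where
  "scal_comp ys F = (\<lambda>x. ys ` F x)"

definition upper_K_convex :: "'b::real_vector set \<Rightarrow> ('a::real_vector \<Rightarrow> 'b set) \<Rightarrow> bool" where
  "upper_K_convex K F \<longleftrightarrow> (\<forall>x y. \<forall>l::real. 0 < l \<and> l < 1 \<longrightarrow>
     {l *\<^sub>R a + (1 - l) *\<^sub>R b | a b. a \<in> F x \<and> b \<in> F y} \<subseteq>
     {c + k | c k. c \<in> F (l *\<^sub>R x + (1 - l) *\<^sub>R y) \<and> k \<in> K})"

definition K_seq_compact :: "'b::real_normed_vector set \<Rightarrow> 'b set \<Rightarrow> bool" where
  "K_seq_compact K A \<longleftrightarrow> A \<noteq> {} \<and> (\<forall>a::nat \<Rightarrow> 'b. (\<forall>n. a n \<in> A) \<longrightarrow>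
     (\<exists>c::nat \<Rightarrow> 'b. (\<forall>n. c n \<in> K) \<and> (\<exists>r l. strict_mono r \<and> l \<in> A \<and>
        ((\<lambda>n. a (r n) - c (r n)) \<longlonglongrightarrow> l))))"

definition lower_continuous_at :: "('a::topological_space \<Rightarrow> 'b::topological_space set) \<Rightarrow> 'a \<Rightarrow> bool" where
  "lower_continuous_at F x \<longleftrightarrow> (\<forall>V. open V \<and> F x \<inter> V \<noteq> {} \<longrightarrow>
     (\<exists>U. open U \<and> x \<in> U \<and> (\<forall>u\<in>U. F u \<inter> V \<noteq> {})))"

definition upper_continuous_at :: "('a::topological_space \<Rightarrow> 'b::topological_space set) \<Rightarrow> 'a \<Rightarrow> bool" where
  "upper_continuous_at F x \<longleftrightarrow> (\<forall>V. open V \<and> F x \<subseteq> V \<longrightarrow>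
     (\<exists>U. open U \<and> x \<in> U \<and> (\<forall>u\<in>U. F u \<subseteq> V)))"

definition sv_continuous_at :: "('a::topological_space \<Rightarrow> 'b::topological_space set) \<Rightarrow> 'a \<Rightarrow> bool" where
  "sv_continuous_at F x \<longleftrightarrow> lower_continuous_at F x \<and> upper_continuous_at F x"

definition finite_dim_space :: "'a::real_vector itself \<Rightarrow> bool" where
  "finite_dim_space _ \<longleftrightarrow> (\<exists>B::'a set. finite B \<and> span B = UNIV)"

end

theory Submission
  imports Defs
begin

text \<open>Scalarize: for \<open>y\<^sup>* \<in> K\<^sup>+\<close> the values \<open>y\<^sup>*(F\<^sub>i x)\<close> attain their minimum \<open>p\<^sub>i x\<close>
  (by \<open>K\<close>-sequential compactness, since \<open>y\<^sup>*\<close> is nonnegative on \<open>K\<close>), and upper \<open>K\<close>-convexity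
  makes \<open>p\<^sub>i\<close> convex. If \<open>T\<close> is in the subdifferential of \<open>F\<^sub>1 + F\<^sub>2\<close> at \<open>xb\<close>, then \<open>y\<^sup>* \<circ> T\<close> is a
  local, hence by convexity a global, subgradient of \<open>p\<^sub>1 + p\<^sub>2\<close> at \<open>xb\<close>. It is split by a
  sandwich theorem: \<open>f = p\<^sub>1(xb + \<cdot>) - p\<^sub>1 xb - y\<^sup>* \<circ> T\<close> and \<open>g = p\<^sub>2(xb + \<cdot>) - p\<^sub>2 xb\<close> are convex
  with \<open>f + g \<ge> 0\<close>, and the algebraic Hahn-Banach theorem applied to the sublinear function
  \<open>q x = inf {(g u + f v) / t | t > 0, u - v = t x}\<close> gives a linear \<open>l\<close> with \<open>-f \<le> l \<le> g\<close>.
  This \<open>l\<close> is continuous because \<open>f\<close> or \<open>g\<close> is bounded above on a ball (lower continuity of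
  \<open>F\<^sub>i\<close> at some point) or because \<open>X\<close> is finite dimensional.\<close>

section \<open>The algebraic Hahn-Banach theorem\<close>

(* linear functionals on subspaces, dominated by q, encoded by their graphs *)
definition dominated_linear_graph :: "('a::real_vector \<Rightarrow> real) \<Rightarrow> ('a \<times> real) set \<Rightarrow> bool" where
  "dominated_linear_graph q G \<longleftrightarrow> (0, 0) \<in> G
     \<and> (\<forall>x a y b. (x, a) \<in> G \<longrightarrow> (y, b) \<in> G \<longrightarrow> (x + y, a + b) \<in> G)
     \<and> (\<forall>x a c. (x, a) \<in> G \<longrightarrow> (c *\<^sub>R x, c * a) \<in> G)
     \<and> (\<forall>x a. (x, a) \<in> G \<longrightarrow> a \<le> q x)"

lemma dominated_linear_graphD:
  assumes "dominated_linear_graph q G"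
  shows "(0, 0) \<in> G"
    and "(x, a) \<in> G \<Longrightarrow> (y, b) \<in> G \<Longrightarrow> (x + y, a + b) \<in> G"
    and "(x, a) \<in> G \<Longrightarrow> (c *\<^sub>R x, c * a) \<in> G"
    and "(x, a) \<in> G \<Longrightarrow> a \<le> q x"
  using assms unfolding dominated_linear_graph_def by blast+

lemma dominated_linear_graph_functional:
  assumes G: "dominated_linear_graph q G" and q0: "q 0 = 0"
    and "(x, a) \<in> G" "(x, b) \<in> G"
  shows "a = b"
proof -
  have "(x + (-1) *\<^sub>R x, a + (-1) * b) \<in> G"
    by (intro dominated_linear_graphD[OF G] assms)
  then have "(0, a - b) \<in> G" by simp
  moreover from this have "((-1) *\<^sub>R 0, (-1) * (a - b)) \<in> G"
    by (rule dominated_linear_graphD(3)[OF G])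
  ultimately have "a - b \<le> q 0" "b - a \<le> q 0"
    using dominated_linear_graphD(4)[OF G] by fastforce+
  with q0 show ?thesis by simp
qed

lemma dominated_linear_graph_chain_Union:
  assumes C: "C \<in> chains {G. dominated_linear_graph q G}" and q0: "q 0 = 0"
  shows "dominated_linear_graph q (insert (0, 0) (\<Union>C))"
proof -
  have G: "dominated_linear_graph q G" if "G \<in> C" for G
    using C that chainsD2 by blast
  have common: "\<exists>G\<in>C. (x, a) \<in> G \<and> (y, b) \<in> G"
    if "(x, a) \<in> \<Union>C" "(y, b) \<in> \<Union>C" for x a y b
    using that chainsD[OF C] by blast
  show ?thesis
    unfolding dominated_linear_graph_def
  proof (intro conjI allI impI)
    fix x a y b
    assume "(x, a) \<in> insert (0, 0) (\<Union>C)" "(y, b) \<in> insert (0, 0) (\<Union>C)"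
    then show "(x + y, a + b) \<in> insert (0, 0) (\<Union>C)"
    proof (elim insertE)
      assume "(x, a) \<in> \<Union>C" "(y, b) \<in> \<Union>C"
      then obtain G where "G \<in> C" "(x, a) \<in> G" "(y, b) \<in> G" using common by blast
      then show ?thesis using dominated_linear_graphD(2)[OF G] by blast
    qed simp_all
  next
    fix x a c
    assume "(x, a) \<in> insert (0, 0) (\<Union>C)"
    then show "(c *\<^sub>R x, c * a) \<in> insert (0, 0) (\<Union>C)"
    proof (elim insertE)
      assume "(x, a) \<in> \<Union>C"
      then show ?thesis using dominated_linear_graphD(3)[OF G] by blast
    qed simp
  next
    fix x a
    assume "(x, a) \<in> insert (0, 0) (\<Union>C)"
    then show "a \<le> q x"
    proof (elim insertE)
      assume "(x, a) \<in> \<Union>C"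
      then show ?thesis using dominated_linear_graphD(4)[OF G] by blast
    qed (simp add: q0)
  qed simp
qed

lemma dominated_extension_value:
  fixes q :: "'a::real_vector \<Rightarrow> real"
  assumes G: "dominated_linear_graph q G" and sub: "\<And>x y. q (x + y) \<le> q x + q y"
  obtains c where "\<And>y b. (y, b) \<in> G \<Longrightarrow> b - q (y - x0) \<le> c"
    and "\<And>y b. (y, b) \<in> G \<Longrightarrow> c \<le> q (y + x0) - b"
proof -
  let ?S = "{b - q (y - x0) | y b. (y, b) \<in> G}"
  have sep: "b1 - q (y1 - x0) \<le> q (y2 + x0) - b2" if "(y1, b1) \<in> G" "(y2, b2) \<in> G" for y1 b1 y2 b2
  proof -
    have "b1 + b2 \<le> q (y1 + y2)"
      using dominated_linear_graphD(2,4)[OF G] that by blast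
    also have "\<dots> \<le> q (y1 - x0) + q (y2 + x0)" using sub[of "y1 - x0" "y2 + x0"] by simp
    finally show ?thesis by simp
  qed
  have "?S \<noteq> {}" using dominated_linear_graphD(1)[OF G] by blast
  moreover have "bdd_above ?S"
    using sep[of _ _ 0 0] dominated_linear_graphD(1)[OF G] unfolding bdd_above_def by blast
  ultimately show ?thesis
    using sep by (intro that[of "Sup ?S"] cSup_upper cSup_least) blast+
qed

lemma dominated_linear_graph_extend_by:
  fixes q :: "'a::real_vector \<Rightarrow> real"
  assumes G: "dominated_linear_graph q G"
    and hom: "\<And>t x. t \<ge> 0 \<Longrightarrow> q (t *\<^sub>R x) = t * q x"
    and lower: "\<And>y b. (y, b) \<in> G \<Longrightarrow> b - q (y - x0) \<le> c"
    and upper: "\<And>y b. (y, b) \<in> G \<Longrightarrow> c \<le> q (y + x0) - b"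
  shows "dominated_linear_graph q {(y + t *\<^sub>R x0, b + t * c) | y b t. (y, b) \<in> G}"
proof -
  have dominated: "b + t * c \<le> q (y + t *\<^sub>R x0)" if yb: "(y, b) \<in> G" for y b t
  proof (cases t "0 :: real" rule: linorder_cases)
    case greater
    have "c \<le> q ((1 / t) *\<^sub>R y + x0) - (1 / t) * b"
      using upper dominated_linear_graphD(3)[OF G yb] by blast
    then have "t * c \<le> t * q ((1 / t) *\<^sub>R y + x0) - b"
      using greater by (simp add: field_simps)
    also have "t * q ((1 / t) *\<^sub>R y + x0) = q (t *\<^sub>R ((1 / t) *\<^sub>R y + x0))"
      using greater by (intro hom[symmetric]) simp
    also have "t *\<^sub>R ((1 / t) *\<^sub>R y + x0) = y + t *\<^sub>R x0"
      using greater by (simp add: scaleR_add_right)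
    finally show ?thesis by simp
  next
    case less
    have "(1 / - t) * b - q ((1 / - t) *\<^sub>R y - x0) \<le> c"
      using lower dominated_linear_graphD(3)[OF G yb] by blast
    then have "b - (- t) * q ((1 / - t) *\<^sub>R y - x0) \<le> (- t) * c"
      using less by (simp add: field_simps)
    also have "(- t) * q ((1 / - t) *\<^sub>R y - x0) = q ((- t) *\<^sub>R ((1 / - t) *\<^sub>R y - x0))"
      using less by (intro hom[symmetric]) simp
    also have "(- t) *\<^sub>R ((1 / - t) *\<^sub>R y - x0) = y + t *\<^sub>R x0"
      using less by (simp add: scaleR_diff_right)
    finally show ?thesis by simp
  qed (use dominated_linear_graphD(4)[OF G yb] in simp)
  show ?thesis
    unfolding dominated_linear_graph_def
  proof (intro conjI allI impI)
    show "(0, 0) \<in> {(y + t *\<^sub>R x0, b + t * c) | y b t. (y, b) \<in> G}"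
      using dominated_linear_graphD(1)[OF G] by (auto intro!: exI[of _ 0])
  next
    fix x a x' a'
    assume "(x, a) \<in> {(y + t *\<^sub>R x0, b + t * c) | y b t. (y, b) \<in> G}"
      and "(x', a') \<in> {(y + t *\<^sub>R x0, b + t * c) | y b t. (y, b) \<in> G}"
    then obtain y b t y' b' t' where "(y, b) \<in> G" "(y', b') \<in> G"
      and "x = y + t *\<^sub>R x0" "a = b + t * c" "x' = y' + t' *\<^sub>R x0" "a' = b' + t' * c"
      by blast
    moreover from this have "(y + y', b + b') \<in> G" by (intro dominated_linear_graphD(2)[OF G])
    ultimately show "(x + x', a + a') \<in> {(y + t *\<^sub>R x0, b + t * c) | y b t. (y, b) \<in> G}"
      by (intro CollectI exI[of _ "y + y'"] exI[of _ "b + b'"] exI[of _ "t + t'"])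
        (auto simp: algebra_simps)
  next
    fix x a s
    assume "(x, a) \<in> {(y + t *\<^sub>R x0, b + t * c) | y b t. (y, b) \<in> G}"
    then obtain y b t where "(y, b) \<in> G" "x = y + t *\<^sub>R x0" "a = b + t * c"
      by blast
    moreover from this have "(s *\<^sub>R y, s * b) \<in> G" by (intro dominated_linear_graphD(3)[OF G])
    ultimately show "(s *\<^sub>R x, s * a) \<in> {(y + t *\<^sub>R x0, b + t * c) | y b t. (y, b) \<in> G}"
      by (intro CollectI exI[of _ "s *\<^sub>R y"] exI[of _ "s * b"] exI[of _ "s * t"])
        (auto simp: algebra_simps)
  next
    fix x a
    assume "(x, a) \<in> {(y + t *\<^sub>R x0, b + t * c) | y b t. (y, b) \<in> G}"
    then show "a \<le> q x" using dominated by blast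
  qed
qed

theorem sublinear_dominated_linear_exists:
  fixes q :: "'a::real_vector \<Rightarrow> real"
  assumes sub: "\<And>x y. q (x + y) \<le> q x + q y"
    and hom: "\<And>t x. t \<ge> 0 \<Longrightarrow> q (t *\<^sub>R x) = t * q x"
  obtains l where "linear l" "\<And>x. l x \<le> q x"
proof -
  have q0: "q 0 = 0" using hom[of 0 0] by simp
  have "\<exists>G\<in>{G. dominated_linear_graph q G}. \<forall>G'\<in>{G. dominated_linear_graph q G}. G \<subseteq> G' \<longrightarrow> G' = G"
  proof (rule Zorn_Lemma2, intro ballI)
    fix C assume "C \<in> chains {G. dominated_linear_graph q G}"
    then have "dominated_linear_graph q (insert (0, 0) (\<Union>C))"
      using q0 by (rule dominated_linear_graph_chain_Union)
    then show "\<exists>U\<in>{G. dominated_linear_graph q G}. \<forall>G\<in>C. G \<subseteq> U"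
      by (intro bexI[of _ "insert (0, 0) (\<Union>C)"]) auto
  qed
  then obtain G where G: "dominated_linear_graph q G"
    and maximal: "\<And>G'. dominated_linear_graph q G' \<Longrightarrow> G \<subseteq> G' \<Longrightarrow> G' = G"
    by blast
  have total: "\<exists>a. (x, a) \<in> G" for x
  proof (rule ccontr)
    assume x_new: "\<nexists>a. (x, a) \<in> G"
    obtain c where lower: "\<And>y b. (y, b) \<in> G \<Longrightarrow> b - q (y - x) \<le> c"
      and upper: "\<And>y b. (y, b) \<in> G \<Longrightarrow> c \<le> q (y + x) - b"
      using dominated_extension_value[OF G sub] by blast
    have G': "dominated_linear_graph q {(y + t *\<^sub>R x, b + t * c) | y b t. (y, b) \<in> G}"
      by (rule dominated_linear_graph_extend_by[OF G hom lower upper])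
    have "G \<subseteq> {(y + t *\<^sub>R x, b + t * c) | y b t. (y, b) \<in> G}"
    proof
      fix z assume "z \<in> G"
      then show "z \<in> {(y + t *\<^sub>R x, b + t * c) | y b t. (y, b) \<in> G}"
        by (intro CollectI exI[of _ "fst z"] exI[of _ "snd z"] exI[of _ 0]) simp
    qed
    then have "{(y + t *\<^sub>R x, b + t * c) | y b t. (y, b) \<in> G} = G"
      by (rule maximal[OF G'])
    moreover have "(0 + 1 *\<^sub>R x, 0 + 1 * c) \<in> {(y + t *\<^sub>R x, b + t * c) | y b t. (y, b) \<in> G}"
      using dominated_linear_graphD(1)[OF G] by blast
    ultimately have "(x, c) \<in> G" by simp
    with x_new show False by blast
  qed
  define l where "l x = (THE a. (x, a) \<in> G)" for x
  have graph: "(x, l x) \<in> G" for x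
  proof -
    have "\<exists>!a. (x, a) \<in> G"
      using total[of x] dominated_linear_graph_functional[OF G q0] by blast
    then show ?thesis unfolding l_def by (rule theI')
  qed
  have l_eq: "l x = a" if "(x, a) \<in> G" for x a
    using dominated_linear_graph_functional[OF G q0 that graph] by simp
  have "linear l"
  proof (rule linearI)
    show "l (x + y) = l x + l y" for x y
      by (rule l_eq, rule dominated_linear_graphD(2)[OF G graph graph])
    show "l (s *\<^sub>R x) = s *\<^sub>R l x" for s x
      using l_eq[OF dominated_linear_graphD(3)[OF G graph]] by simp
  qed
  moreover have "l x \<le> q x" for x using dominated_linear_graphD(4)[OF G graph] .
  ultimately show thesis by (rule that)
qed

section \<open>Continuity of linear functionals\<close>

lemma abs_coeff_mult_infdist_span_le:
  fixes b :: "'a::real_normed_vector"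
  assumes "x - t *\<^sub>R b \<in> span S"
  shows "\<bar>t\<bar> * infdist b (span S) \<le> norm x"
proof (cases "t = 0")
  case False
  have "- ((1 / t) *\<^sub>R (x - t *\<^sub>R b)) \<in> span S"
    using assms by (simp add: span_neg span_scale)
  then have "infdist b (span S) \<le> dist b (- ((1 / t) *\<^sub>R (x - t *\<^sub>R b)))"
    by (rule infdist_le)
  also have "\<dots> = norm x / \<bar>t\<bar>"
    using False by (simp add: dist_norm algebra_simps)
  finally show ?thesis using False by (simp add: field_simps)
qed simp

lemma closed_span_finite:
  fixes S :: "'a::real_normed_vector set"
  assumes "finite S"
  shows "closed (span S)"
  using assms
proof (induction S rule: finite_induct)
  case (insert b S)
  show ?case
  proof (cases "b \<in> span S")
    case True
    then show ?thesis using insert.IH by (simp add: span_redundant)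
  next
    case False
    define d where "d = infdist b (span S)"
    have d: "d > 0"
      unfolding d_def using insert.IH False span_zero[of S]
      by (intro infdist_pos_not_in_closed) auto
    show ?thesis
    proof (rule closed_sequential_limits[THEN iffD2], intro allI impI, elim conjE)
      fix xs l assume xs: "\<forall>n. xs n \<in> span (insert b S)" and lim: "xs \<longlonglongrightarrow> l"
      have "\<forall>n. \<exists>t. xs n - t *\<^sub>R b \<in> span S"
        using xs by (simp add: span_breakdown_eq)
      then obtain t where t: "\<And>n. xs n - t n *\<^sub>R b \<in> span S"
        by metis
      have t_lipschitz: "dist (t m) (t n) * d \<le> dist (xs m) (xs n)" for m n
      proof -
        have "(xs m - xs n) - (t m - t n) *\<^sub>R b = (xs m - t m *\<^sub>R b) - (xs n - t n *\<^sub>R b)"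
          by (simp add: algebra_simps)
        also have "\<dots> \<in> span S" using t by (simp add: span_diff)
        finally show ?thesis
          unfolding d_def dist_real_def dist_norm by (rule abs_coeff_mult_infdist_span_le)
      qed
      have "Cauchy t"
      proof (rule metric_CauchyI)
        fix e :: real assume "e > 0"
        then have "e * d > 0" using d by simp
        then obtain M where M: "\<forall>m\<ge>M. \<forall>n\<ge>M. dist (xs m) (xs n) < e * d"
          using metric_CauchyD[OF LIMSEQ_imp_Cauchy[OF lim]] by blast
        have "dist (t m) (t n) < e" if "m \<ge> M" "n \<ge> M" for m n
        proof -
          have "dist (t m) (t n) * d < e * d"
            using order_le_less_trans[OF t_lipschitz[of m n]] M that by blast
          then show ?thesis using d by simp
        qed
        then show "\<exists>M. \<forall>m\<ge>M. \<forall>n\<ge>M. dist (t m) (t n) < e" by blast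
      qed
      then obtain tl where "t \<longlonglongrightarrow> tl" using Cauchy_convergent_iff convergent_def by blast
      then have "(\<lambda>n. xs n - t n *\<^sub>R b) \<longlonglongrightarrow> l - tl *\<^sub>R b"
        by (intro tendsto_intros lim)
      with insert.IH t have "l - tl *\<^sub>R b \<in> span S"
        by (rule closed_sequentially)
      then show "l \<in> span (insert b S)" using span_breakdown_eq by blast
    qed
  qed
qed simp

lemma linear_bounded_on_finite_span:
  fixes f :: "'a::real_normed_vector \<Rightarrow> real"
  assumes "finite S" and f: "linear f"
  shows "\<exists>C\<ge>0. \<forall>x\<in>span S. \<bar>f x\<bar> \<le> C * norm x"
  using assms(1)
proof (induction S rule: finite_induct)
  case empty
  then show ?case using linear_0[OF f] by auto
next
  case (insert b S)
  then obtain C where C: "C \<ge> 0" "\<And>x. x \<in> span S \<Longrightarrow> \<bar>f x\<bar> \<le> C * norm x"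
    by blast
  show ?case
  proof (cases "b \<in> span S")
    case True
    then show ?thesis using insert.IH by (simp add: span_redundant)
  next
    case False
    define d where "d = infdist b (span S)"
    have d: "d > 0"
      unfolding d_def using closed_span_finite[OF insert.hyps(1)] False span_zero[of S]
      by (intro infdist_pos_not_in_closed) auto
    have "\<bar>f x\<bar> \<le> (C * (1 + norm b / d) + \<bar>f b\<bar> / d) * norm x"
      if x: "x \<in> span (insert b S)" for x
    proof -
      obtain t where t: "x - t *\<^sub>R b \<in> span S" using x span_breakdown_eq by blast
      have "\<bar>t\<bar> * d \<le> norm x"
        unfolding d_def using t by (rule abs_coeff_mult_infdist_span_le)
      then have t_le: "\<bar>t\<bar> \<le> norm x / d" using d by (simp add: field_simps)
      have "f x = f (x - t *\<^sub>R b) + t * f b"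
        using f by (simp add: linear_diff linear_scale)
      then have "\<bar>f x\<bar> \<le> \<bar>f (x - t *\<^sub>R b)\<bar> + \<bar>t\<bar> * \<bar>f b\<bar>"
        by (metis abs_mult abs_triangle_ineq)
      also have "\<dots> \<le> C * norm (x - t *\<^sub>R b) + \<bar>t\<bar> * \<bar>f b\<bar>"
        using C(2)[OF t] by simp
      also have "\<dots> \<le> C * (norm x + \<bar>t\<bar> * norm b) + \<bar>t\<bar> * \<bar>f b\<bar>"
        using norm_triangle_ineq4[of x "t *\<^sub>R b"] C(1) by (simp add: mult_left_mono)
      also have "\<dots> \<le> C * (norm x + norm x / d * norm b) + norm x / d * \<bar>f b\<bar>"
        using t_le C(1) by (intro add_mono mult_left_mono mult_right_mono) auto
      also have "\<dots> = (C * (1 + norm b / d) + \<bar>f b\<bar> / d) * norm x"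
        by (simp add: algebra_simps)
      finally show ?thesis .
    qed
    moreover have "C * (1 + norm b / d) + \<bar>f b\<bar> / d \<ge> 0" using C(1) d by simp
    ultimately show ?thesis by blast
  qed
qed

lemma finite_dim_space_linear_imp_bounded_linear:
  fixes f :: "'a::real_normed_vector \<Rightarrow> real"
  assumes "finite_dim_space TYPE('a)" and "linear f"
  shows "bounded_linear f"
proof -
  obtain B :: "'a set" where "finite B" "span B = UNIV"
    using assms(1) unfolding finite_dim_space_def by blast
  then obtain C where "\<And>x. \<bar>f x\<bar> \<le> C * norm x"
    using linear_bounded_on_finite_span[OF _ assms(2)] by blast
  with assms(2) show ?thesis
    by (intro bounded_linear_intro[where K = C]) (auto simp: linear_add linear_scale mult.commute)
qed

lemma linear_bounded_above_on_ball_imp_bounded_linear: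
  fixes l :: "'a::real_normed_vector \<Rightarrow> real"
  assumes l: "linear l" and r: "r > 0" and M: "\<And>x. norm x < r \<Longrightarrow> l x \<le> M"
  shows "bounded_linear l"
proof -
  have "\<bar>l x\<bar> \<le> (2 * M / r) * norm x" for x
  proof (cases "x = 0")
    case False
    define c where "c = r / (2 * norm x)"
    have c: "c > 0" "norm (c *\<^sub>R x) < r" using False r unfolding c_def by simp_all
    have "c * l x \<le> M" "- (c * l x) \<le> M"
      using M[of "c *\<^sub>R x"] M[of "- (c *\<^sub>R x)"] c l by (simp_all add: linear_neg linear_scale)
    then have "\<bar>l x\<bar> \<le> M / c" using c by (simp add: field_simps abs_if)
    also have "M / c = (2 * M / r) * norm x" unfolding c_def using r False by (simp add: field_simps)
    finally show ?thesis .
  qed (simp add: linear_0[OF l])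
  with l show ?thesis
    by (intro bounded_linear_intro[where K = "2 * M / r"]) (auto simp: linear_add linear_scale mult.commute)
qed

section \<open>A sandwich theorem and the subgradient sum rule for convex functions\<close>

locale convex_sandwich =
  fixes f g :: "'a::real_vector \<Rightarrow> real"
  assumes convex_f: "convex_on UNIV f" and convex_g: "convex_on UNIV g"
    and f0: "f 0 = 0" and g0: "g 0 = 0"
    and sum_nonneg: "\<And>x. 0 \<le> f x + g x"
begin

definition gauge_values :: "'a \<Rightarrow> real set" where
  "gauge_values x = {(g u + f v) / t | t u v. t > 0 \<and> u - v = t *\<^sub>R x}"

definition gauge :: "'a \<Rightarrow> real" where
  "gauge x = Inf (gauge_values x)"

lemma gauge_values_lower_bound:
  assumes "a \<in> gauge_values x"
  shows "- g (- x) \<le> a"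
proof -
  obtain t u v where t: "t > 0" and uv: "u - v = t *\<^sub>R x" and a: "a = (g u + f v) / t"
    using assms unfolding gauge_values_def by blast
  define w where "w = 1 / (1 + t)"
  have w: "w > 0" "1 - t * w = w" "0 \<le> t * w" "t * w \<le> 1"
    using t unfolding w_def by (auto simp: field_simps)
  \<comment> \<open>the same point is a convex combination of \<open>u, -x\<close> and of \<open>v, 0\<close>\<close>
  have "u = v + t *\<^sub>R x" using uv by (simp add: diff_eq_eq add.commute)
  then have "(1 - t * w) *\<^sub>R u + (t * w) *\<^sub>R (- x) = (1 - t * w) *\<^sub>R v + (t * w) *\<^sub>R 0"
    unfolding w(2) by (simp add: scaleR_add_right mult.commute)
  then have "0 \<le> f ((1 - t * w) *\<^sub>R v + (t * w) *\<^sub>R 0) + g ((1 - t * w) *\<^sub>R u + (t * w) *\<^sub>R (- x))"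
    using sum_nonneg by metis
  then have "0 \<le> ((1 - t * w) * g u + (t * w) * g (- x)) + ((1 - t * w) * f v + (t * w) * f 0)"
    using convex_onD[OF convex_g w(3,4) UNIV_I UNIV_I, of u "- x"]
      convex_onD[OF convex_f w(3,4) UNIV_I UNIV_I, of v 0]
    by linarith
  then have "0 \<le> w * ((g u + f v) + t * g (- x))"
    unfolding w(2) by (simp add: f0 algebra_simps)
  then have "0 \<le> (g u + f v) + t * g (- x)"
    using w(1) by (simp add: zero_le_mult_iff)
  then show ?thesis
    using t unfolding a by (simp add: field_simps)
qed

lemma gauge_le:
  assumes "t > 0" and "u - v = t *\<^sub>R x"
  shows "gauge x \<le> (g u + f v) / t"
  unfolding gauge_def
proof (rule cInf_lower)
  show "(g u + f v) / t \<in> gauge_values x"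
    unfolding gauge_values_def using assms by blast
  show "bdd_below (gauge_values x)"
    using gauge_values_lower_bound unfolding bdd_below_def by blast
qed

lemma gauge_values_nonempty: "gauge_values x \<noteq> {}"
proof -
  have "(g x + f 0) / 1 \<in> gauge_values x"
    unfolding gauge_values_def by (intro CollectI exI[of _ 1] exI[of _ x] exI[of _ 0]) simp
  then show ?thesis by blast
qed

lemma gauge_greatest:
  assumes "\<And>a. a \<in> gauge_values x \<Longrightarrow> c \<le> a"
  shows "c \<le> gauge x"
  unfolding gauge_def using gauge_values_nonempty assms by (rule cInf_greatest)

lemma gauge_le_g: "gauge x \<le> g x"
  using gauge_le[of 1 x 0 x] f0 by simp

lemma gauge_uminus_le_f: "gauge (- x) \<le> f x"
  using gauge_le[of 1 0 x "- x"] g0 by simp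

lemma gauge_zero: "gauge 0 = 0"
  using gauge_le_g[of 0] gauge_greatest[of 0 0] gauge_values_lower_bound[of _ 0] g0
  by fastforce

lemma gauge_scale_le:
  assumes s: "s > 0"
  shows "gauge (s *\<^sub>R x) \<le> s * gauge x"
proof -
  have "gauge (s *\<^sub>R x) / s \<le> a" if a_in: "a \<in> gauge_values x" for a
  proof -
    obtain t u v where t: "t > 0" and uv: "u - v = t *\<^sub>R x" and a: "a = (g u + f v) / t"
      using a_in unfolding gauge_values_def by blast
    have "u - v = (t / s) *\<^sub>R (s *\<^sub>R x)" using uv s by simp
    then have "gauge (s *\<^sub>R x) \<le> (g u + f v) / (t / s)"
      using t s by (intro gauge_le) simp_all
    then show ?thesis using s t unfolding a by (simp add: field_simps)
  qed
  then have "gauge (s *\<^sub>R x) / s \<le> gauge x" by (rule gauge_greatest)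
  then show ?thesis using s by (simp add: field_simps)
qed

lemma gauge_scale:
  assumes "s \<ge> 0"
  shows "gauge (s *\<^sub>R x) = s * gauge x"
proof (cases "s = 0")
  case False
  then have s: "s > 0" using assms by simp
  have "gauge x \<le> (1 / s) * gauge (s *\<^sub>R x)"
    using gauge_scale_le[of "1 / s" "s *\<^sub>R x"] s by simp
  then show ?thesis
    using gauge_scale_le[OF s, of x] s by (simp add: field_simps)
qed (simp add: gauge_zero)

lemma gauge_add_le: "gauge (x + y) \<le> gauge x + gauge y"
proof -
  have sum_le: "gauge (x + y) \<le> a + b" if a_in: "a \<in> gauge_values x" and b_in: "b \<in> gauge_values y" for a b
  proof -
    obtain t1 u1 v1 where t1: "t1 > 0" and uv1: "u1 - v1 = t1 *\<^sub>R x" and a: "a = (g u1 + f v1) / t1"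
      using a_in unfolding gauge_values_def by blast
    obtain t2 u2 v2 where t2: "t2 > 0" and uv2: "u2 - v2 = t2 *\<^sub>R y" and b: "b = (g u2 + f v2) / t2"
      using b_in unfolding gauge_values_def by blast
    define T where "T = t1 * t2 / (t1 + t2)"
    have T: "T > 0" using t1 t2 unfolding T_def by simp
    have weights: "T / t1 + T / t2 = 1"
      using t1 t2 unfolding T_def by (simp add: add_num_frac)
    define s where "s = T / t2"
    have "T / t1 > 0" "T / t2 > 0" using T t1 t2 by simp_all
    then have s: "0 \<le> s" "s \<le> 1" "1 - s = T / t1"
      using weights unfolding s_def by linarith+
    define u where "u = (1 - s) *\<^sub>R u1 + s *\<^sub>R u2"
    define v where "v = (1 - s) *\<^sub>R v1 + s *\<^sub>R v2"
    have "u - v = (1 - s) *\<^sub>R (u1 - v1) + s *\<^sub>R (u2 - v2)"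
      unfolding u_def v_def by (simp add: algebra_simps)
    also have "\<dots> = T *\<^sub>R (x + y)"
    proof -
      have "(1 - s) * t1 = T" "s * t2 = T"
        using s(3) t1 t2 unfolding s_def by simp_all
      then show ?thesis unfolding uv1 uv2 by (simp add: scaleR_add_right)
    qed
    finally have "gauge (x + y) \<le> (g u + f v) / T"
      using T by (intro gauge_le)
    also have "\<dots> \<le> ((1 - s) * (g u1 + f v1) + s * (g u2 + f v2)) / T"
      using T convex_onD[OF convex_g s(1,2) UNIV_I UNIV_I, of u1 u2]
        convex_onD[OF convex_f s(1,2) UNIV_I UNIV_I, of v1 v2]
      unfolding u_def v_def by (intro divide_right_mono) (simp_all add: algebra_simps)
    also have "(1 - s) * (g u1 + f v1) + s * (g u2 + f v2) = T * (a + b)"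
      unfolding s(3) unfolding s_def a b by (simp add: algebra_simps add_divide_distrib)
    also have "T * (a + b) / T = a + b" using T by simp
    finally show ?thesis .
  qed
  have "gauge (x + y) - gauge y \<le> a" if a: "a \<in> gauge_values x" for a
    using sum_le[OF a] gauge_greatest[of y "gauge (x + y) - a"] by fastforce
  then have "gauge (x + y) - gauge y \<le> gauge x" by (rule gauge_greatest)
  then show ?thesis by simp
qed

end

definition bounded_above_on_ball :: "('a::metric_space \<Rightarrow> real) \<Rightarrow> bool" where
  "bounded_above_on_ball f \<longleftrightarrow> (\<exists>z r B. 0 < r \<and> (\<forall>x\<in>ball z r. f x \<le> B))"

theorem convex_sandwich_bounded_linear:
  fixes f g :: "'a::real_normed_vector \<Rightarrow> real"
  assumes "convex_sandwich f g"
    and reg: "bounded_above_on_ball f \<or> bounded_above_on_ball g \<or> finite_dim_space TYPE('a)"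
  obtains l where "bounded_linear l" "\<And>x. - f x \<le> l x" "\<And>x. l x \<le> g x"
proof -
  interpret convex_sandwich f g by fact
  obtain l where l: "linear l" and le: "\<And>x. l x \<le> gauge x"
    using sublinear_dominated_linear_exists[of gauge] gauge_add_le gauge_scale by blast
  have "bounded_linear l"
    using reg
  proof (elim disjE)
    assume "bounded_above_on_ball f"
    then obtain z r B where r: "r > 0" and B: "\<And>x. x \<in> ball z r \<Longrightarrow> f x \<le> B"
      unfolding bounded_above_on_ball_def by blast
    show ?thesis
    proof (rule linear_bounded_above_on_ball_imp_bounded_linear[OF l r])
      fix x :: 'a assume "norm x < r"
      then have "f (z - x) \<le> B" using B by (simp add: dist_norm)
      moreover have "l x \<le> (g z + f (z - x)) / 1"
        using le[of x] gauge_le[of 1 z "z - x" x] by simp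
      ultimately show "l x \<le> g z + B" by simp
    qed
  next
    assume "bounded_above_on_ball g"
    then obtain z r B where r: "r > 0" and B: "\<And>x. x \<in> ball z r \<Longrightarrow> g x \<le> B"
      unfolding bounded_above_on_ball_def by blast
    show ?thesis
    proof (rule linear_bounded_above_on_ball_imp_bounded_linear[OF l r])
      fix x :: 'a assume "norm x < r"
      then have "g (z + x) \<le> B" using B by (simp add: dist_norm)
      moreover have "l x \<le> (g (z + x) + f z) / 1"
        using le[of x] gauge_le[of 1 "z + x" z x] by simp
      ultimately show "l x \<le> B + f z" by simp
    qed
  next
    assume "finite_dim_space TYPE('a)"
    then show ?thesis using l by (rule finite_dim_space_linear_imp_bounded_linear)
  qed
  moreover have "- f x \<le> l x" for x
    using le[of "- x"] gauge_uminus_le_f[of x] l by (simp add: linear_neg)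
  moreover have "l x \<le> g x" for x using le[of x] gauge_le_g[of x] by simp
  ultimately show thesis using that by blast
qed

lemma convex_on_translate_sub_linear:
  assumes convex: "convex_on UNIV p" and L: "linear L"
  shows "convex_on UNIV (\<lambda>y. p (xb + y) - c - L y)"
proof (rule convex_onI)
  fix t :: real and x y assume t: "0 < t" "t < 1"
  have "xb + ((1 - t) *\<^sub>R x + t *\<^sub>R y) = (1 - t) *\<^sub>R (xb + x) + t *\<^sub>R (xb + y)"
    by (simp add: algebra_simps)
  moreover have "L ((1 - t) *\<^sub>R x + t *\<^sub>R y) = (1 - t) * L x + t * L y"
    using L by (simp add: linear_add linear_scale)
  ultimately show "p (xb + ((1 - t) *\<^sub>R x + t *\<^sub>R y)) - c - L ((1 - t) *\<^sub>R x + t *\<^sub>R y)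
      \<le> (1 - t) * (p (xb + x) - c - L x) + t * (p (xb + y) - c - L y)"
    using convex_onD[OF convex, of t "xb + x" "xb + y"] t by (simp add: algebra_simps)
qed simp

lemma bounded_above_on_ball_translate_sub_linear:
  fixes p :: "'a::real_normed_vector \<Rightarrow> real"
  assumes p: "bounded_above_on_ball p" and L: "bounded_linear L"
  shows "bounded_above_on_ball (\<lambda>y. p (xb + y) - c - L y)"
proof -
  obtain z r B where r: "r > 0" and B: "\<And>x. x \<in> ball z r \<Longrightarrow> p x \<le> B"
    using p unfolding bounded_above_on_ball_def by blast
  obtain C where C: "C > 0" "\<And>y. norm (L y) \<le> norm y * C"
    using bounded_linear.pos_bounded[OF L] by blast
  have "p (xb + y) - c - L y \<le> B - c + (norm (z - xb) + r) * C" if y: "y \<in> ball (z - xb) r" for y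
  proof -
    have "xb + y \<in> ball z r" using y by (simp add: dist_norm algebra_simps)
    have "norm y \<le> norm (z - xb) + r"
      using y norm_triangle_sub[of y "z - xb"] by (simp add: dist_norm norm_minus_commute)
    have "- L y \<le> norm (L y)" by simp
    also have "\<dots> \<le> norm y * C" by (rule C(2))
    also have "\<dots> \<le> (norm (z - xb) + r) * C"
      using \<open>norm y \<le> norm (z - xb) + r\<close> C(1) by (intro mult_right_mono) auto
    finally have "- L y \<le> (norm (z - xb) + r) * C" .
    with B[OF \<open>xb + y \<in> ball z r\<close>] show ?thesis by linarith
  qed
  then show ?thesis unfolding bounded_above_on_ball_def using r by blast
qed

theorem convex_subgradient_sum_rule:
  fixes p1 p2 :: "'a::real_normed_vector \<Rightarrow> real"
  assumes convex: "convex_on UNIV p1" "convex_on UNIV p2" and L: "bounded_linear L"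
    and subgradient: "\<And>x. p1 xb + p2 xb + L (x - xb) \<le> p1 x + p2 x"
    and reg: "bounded_above_on_ball p1 \<or> bounded_above_on_ball p2 \<or> finite_dim_space TYPE('a)"
  obtains L1 L2 where "bounded_linear L1" "bounded_linear L2" "\<And>x. L x = L1 x + L2 x"
    "\<And>x. p1 xb + L1 (x - xb) \<le> p1 x" "\<And>x. p2 xb + L2 (x - xb) \<le> p2 x"
proof -
  define f where "f y = p1 (xb + y) - p1 xb - L y" for y
  define g where "g y = p2 (xb + y) - p2 xb" for y
  have "convex_sandwich f g"
  proof
    show "convex_on UNIV f" unfolding f_def
      using convex(1) bounded_linear.linear[OF L] by (rule convex_on_translate_sub_linear)
    show "convex_on UNIV g" unfolding g_def
      using convex_on_translate_sub_linear[OF convex(2) linear_zero] by simp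
    show "0 \<le> f y + g y" for y
      using subgradient[of "xb + y"] unfolding f_def g_def by simp
  qed (simp_all add: f_def g_def linear_0[OF bounded_linear.linear[OF L]])
  moreover have "bounded_above_on_ball f \<or> bounded_above_on_ball g \<or> finite_dim_space TYPE('a)"
    using reg bounded_above_on_ball_translate_sub_linear[OF _ L, of p1 xb "p1 xb"]
      bounded_above_on_ball_translate_sub_linear[OF _ bounded_linear_zero, of p2 xb "p2 xb"]
    unfolding f_def[abs_def] g_def[abs_def] by auto
  ultimately obtain l where l: "bounded_linear l" "\<And>y. - f y \<le> l y" "\<And>y. l y \<le> g y"
    by (rule convex_sandwich_bounded_linear) blast
  show thesis
  proof (rule that[of "\<lambda>x. L x - l x" l])
    show "bounded_linear (\<lambda>x. L x - l x)" using L l(1) by (rule bounded_linear_sub)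
    show "p1 xb + (L (x - xb) - l (x - xb)) \<le> p1 x" for x using l(2)[of "x - xb"] unfolding f_def by simp
    show "p2 xb + l (x - xb) \<le> p2 x" for x using l(3)[of "x - xb"] unfolding g_def by simp
  qed (simp_all add: l(1))
qed

lemma convex_local_subgradient_imp_global:
  fixes \<phi> :: "'a::real_normed_vector \<Rightarrow> real"
  assumes convex: "convex_on UNIV \<phi>" and L: "linear L"
    and local: "\<And>e. e > 0 \<Longrightarrow> \<exists>\<delta>>0. \<forall>x\<in>ball xb \<delta>. \<phi> xb + L (x - xb) - e * norm (x - xb) \<le> \<phi> x"
  shows "\<phi> xb + L (x - xb) \<le> \<phi> x"
proof (cases "x = xb")
  case False
  define D where "D = norm (x - xb)"
  have D: "D > 0" using False unfolding D_def by simp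
  show ?thesis
  proof (rule field_le_epsilon)
    fix e :: real assume e: "e > 0"
    then obtain \<delta> where \<delta>: "\<delta> > 0"
      and near: "\<forall>z\<in>ball xb \<delta>. \<phi> xb + L (z - xb) - e / D * norm (z - xb) \<le> \<phi> z"
      using local[of "e / D"] D by auto
    \<comment> \<open>move from \<open>xb\<close> towards \<open>x\<close> until the local inequality applies, then use convexity\<close>
    define s where "s = min 1 (\<delta> / (2 * D))"
    have s: "0 < s" "s \<le> 1" "s * D < \<delta>"
      using \<delta> D unfolding s_def by (auto simp: min_def field_simps)
    define z where "z = (1 - s) *\<^sub>R xb + s *\<^sub>R x"
    have zx: "z - xb = s *\<^sub>R (x - xb)" unfolding z_def by (simp add: algebra_simps)
    then have nz: "norm (z - xb) = s * D" unfolding D_def using s by simp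
    then have "z \<in> ball xb \<delta>" using s by (simp add: dist_norm norm_minus_commute)
    then have "\<phi> xb + L (z - xb) - e / D * norm (z - xb) \<le> \<phi> z" using near by blast
    then have "\<phi> xb + s * L (x - xb) - e * s \<le> \<phi> z"
      unfolding nz unfolding zx linear_scale[OF L] using D by simp
    moreover have "\<phi> z \<le> (1 - s) * \<phi> xb + s * \<phi> x"
      unfolding z_def using convex_onD[OF convex, of s xb x] s by simp
    ultimately have "s * (\<phi> xb + L (x - xb)) \<le> s * (\<phi> x + e)" by (simp add: algebra_simps)
    then show "\<phi> xb + L (x - xb) \<le> \<phi> x + e" using s(1) by simp
  qed
qed (simp add: linear_0[OF L])

section \<open>Scalarization of set-valued maps\<close>

lemma K_seq_compact_attains_min:
  fixes ys :: "'b::real_normed_vector \<Rightarrow> real"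
  assumes ys: "bounded_linear ys" and pos: "\<And>k. k \<in> K \<Longrightarrow> 0 \<le> ys k"
    and A: "K_seq_compact K A"
  obtains l where "l \<in> A" "\<And>b. b \<in> A \<Longrightarrow> ys l \<le> ys b"
proof -
  let ?m = "INF a\<in>A. ereal (ys a)"
  have "A \<noteq> {}" using A unfolding K_seq_compact_def by blast
  then obtain v :: "nat \<Rightarrow> ereal" where v: "decseq v" "range v \<subseteq> (\<lambda>a. ereal (ys a)) ` A"
    and m: "?m = (INF n. v n)"
    using Inf_countable_INF[of "(\<lambda>a. ereal (ys a)) ` A"] by auto
  have "\<forall>n. \<exists>a\<in>A. v n = ereal (ys a)" using v(2) by blast
  then obtain a where a: "\<And>n. a n \<in> A" and va: "\<And>n. v n = ereal (ys (a n))" by metis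
  obtain c r l where c: "\<And>n. c n \<in> K" and r: "strict_mono r" and l: "l \<in> A"
    and lim: "(\<lambda>n. a (r n) - c (r n)) \<longlonglongrightarrow> l"
    using A a unfolding K_seq_compact_def by metis
  have lim_l: "(\<lambda>n. ereal (ys (a (r n) - c (r n)))) \<longlonglongrightarrow> ereal (ys l)"
    using bounded_linear.tendsto[OF ys lim] by simp
  have lim_m: "(\<lambda>n. ereal (ys (a (r n)))) \<longlonglongrightarrow> ?m"
    using LIMSEQ_subseq_LIMSEQ[OF LIMSEQ_INF[OF v(1)] r] unfolding m comp_def va .
  \<comment> \<open>subtracting elements of \<open>K\<close> can only decrease the value of \<open>ys\<close>\<close>
  have le: "ereal (ys (a (r n) - c (r n))) \<le> ereal (ys (a (r n)))" for n
    using pos[OF c] by (simp add: linear_diff[OF bounded_linear.linear[OF ys]])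
  have "ereal (ys l) \<le> ?m" using LIMSEQ_le[OF lim_l lim_m] le by blast
  then have "ys l \<le> ys b" if "b \<in> A" for b
    using INF_lower[OF that, of "\<lambda>a. ereal (ys a)"] by (meson ereal_less_eq(3) order_trans)
  with l show thesis by (rule that)
qed

lemma minimizer_selection:
  fixes ys :: "'b::real_normed_vector \<Rightarrow> real"
  assumes "bounded_linear ys" "\<And>k. k \<in> K \<Longrightarrow> 0 \<le> ys k" "\<And>x. K_seq_compact K (F x)"
  obtains m where "\<And>x. m x \<in> F x" "\<And>x b. b \<in> F x \<Longrightarrow> ys (m x) \<le> ys b"
proof -
  have "\<forall>x. \<exists>a. a \<in> F x \<and> (\<forall>b\<in>F x. ys a \<le> ys b)"
    using K_seq_compact_attains_min[OF assms(1,2,3)] by metis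
  then show thesis using that by metis
qed

lemma convex_on_min_value:
  fixes ys :: "'b::real_normed_vector \<Rightarrow> real" and F :: "'a::real_vector \<Rightarrow> 'b set"
  assumes F: "upper_K_convex K F" and ys: "linear ys" and pos: "\<And>k. k \<in> K \<Longrightarrow> 0 \<le> ys k"
    and m: "\<And>x. m x \<in> F x" and min: "\<And>x b. b \<in> F x \<Longrightarrow> ys (m x) \<le> ys b"
  shows "convex_on UNIV (\<lambda>x. ys (m x))"
proof (rule convex_onI)
  fix t :: real and x y assume t: "0 < t" "t < 1"
  have "{(1 - t) *\<^sub>R a + t *\<^sub>R b | a b. a \<in> F x \<and> b \<in> F y}
      \<subseteq> {c + k | c k. c \<in> F ((1 - t) *\<^sub>R x + t *\<^sub>R y) \<and> k \<in> K}"
    using F[unfolded upper_K_convex_def, rule_format, of "1 - t" x y] t by simp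
  moreover have "(1 - t) *\<^sub>R m x + t *\<^sub>R m y \<in> {(1 - t) *\<^sub>R a + t *\<^sub>R b | a b. a \<in> F x \<and> b \<in> F y}"
    using m by blast
  ultimately have "(1 - t) *\<^sub>R m x + t *\<^sub>R m y \<in> {c + k | c k. c \<in> F ((1 - t) *\<^sub>R x + t *\<^sub>R y) \<and> k \<in> K}"
    by (rule subsetD)
  then obtain c k where ck: "(1 - t) *\<^sub>R m x + t *\<^sub>R m y = c + k"
    and c: "c \<in> F ((1 - t) *\<^sub>R x + t *\<^sub>R y)" and k: "k \<in> K"
    by blast
  have "(1 - t) * ys (m x) + t * ys (m y) = ys c + ys k"
    using arg_cong[OF ck, of ys] ys by (simp add: linear_add linear_scale)
  then show "ys (m ((1 - t) *\<^sub>R x + t *\<^sub>R y)) \<le> (1 - t) * ys (m x) + t * ys (m y)"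
    using min[OF c] pos[OF k] by linarith
qed simp

lemma lower_continuous_min_value_bounded_above:
  fixes ys :: "'b::real_normed_vector \<Rightarrow> real" and F :: "'a::metric_space \<Rightarrow> 'b set"
  assumes F: "lower_continuous_at F x0" "F x0 \<noteq> {}" and ys: "bounded_linear ys"
    and min: "\<And>x b. b \<in> F x \<Longrightarrow> ys (m x) \<le> ys b"
  shows "bounded_above_on_ball (\<lambda>x. ys (m x))"
proof -
  obtain a where a: "a \<in> F x0" using F(2) by blast
  obtain C where C: "C > 0" "\<And>y. norm (ys y) \<le> norm y * C"
    using bounded_linear.pos_bounded[OF ys] by blast
  have "open (ball a 1) \<and> F x0 \<inter> ball a 1 \<noteq> {}" using a by auto
  then have "\<exists>U. open U \<and> x0 \<in> U \<and> (\<forall>u\<in>U. F u \<inter> ball a 1 \<noteq> {})"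
    by (rule F(1)[unfolded lower_continuous_at_def, rule_format])
  then obtain U where U: "open U" "x0 \<in> U" and meets: "\<And>u. u \<in> U \<Longrightarrow> F u \<inter> ball a 1 \<noteq> {}"
    by blast
  obtain r where r: "r > 0" "ball x0 r \<subseteq> U"
    using open_contains_ball_eq[OF U(1)] U(2) by blast
  have "ys (m x) \<le> ys a + C" if x: "x \<in> ball x0 r" for x
  proof -
    have "x \<in> U" using r(2) x by blast
    then obtain b where b: "b \<in> F x" "dist a b < 1" using meets by fastforce
    have "ys (b - a) \<le> norm (ys (b - a))" by simp
    also have "\<dots> \<le> norm (b - a) * C" by (rule C(2))
    also have "\<dots> \<le> 1 * C"
      using b(2) C(1) by (intro mult_right_mono) (simp_all add: dist_norm norm_minus_commute)
    finally have "ys b \<le> ys a + C"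
      using linear_diff[OF bounded_linear.linear[OF ys], of b a] by simp
    then show ?thesis using min[OF b(1)] by linarith
  qed
  then show ?thesis unfolding bounded_above_on_ball_def using r(1) by blast
qed

lemma min_value_of_sum:
  fixes ys :: "'b::real_vector \<Rightarrow> real"
  assumes ys: "linear ys"
    and m: "\<And>x. m x \<in> F x" "\<And>x b. b \<in> F x \<Longrightarrow> ys (m x) \<le> ys b"
    and n: "\<And>x. n x \<in> G x" "\<And>x b. b \<in> G x \<Longrightarrow> ys (n x) \<le> ys b"
  shows "ys (m x) + ys (n x) \<in> scal_comp ys (\<lambda>x. {a + b | a b. a \<in> F x \<and> b \<in> G x}) x"
    and "c \<in> scal_comp ys (\<lambda>x. {a + b | a b. a \<in> F x \<and> b \<in> G x}) x \<Longrightarrow> ys (m x) + ys (n x) \<le> c"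
proof -
  show "ys (m x) + ys (n x) \<in> scal_comp ys (\<lambda>x. {a + b | a b. a \<in> F x \<and> b \<in> G x}) x"
  proof -
    have "ys (m x + n x) \<in> ys ` {a + b | a b. a \<in> F x \<and> b \<in> G x}"
      using m(1) n(1) by (intro imageI) blast
    then show ?thesis unfolding scal_comp_def by (simp only: linear_add[OF ys])
  qed
  assume "c \<in> scal_comp ys (\<lambda>x. {a + b | a b. a \<in> F x \<and> b \<in> G x}) x"
  then obtain a b where "c = ys (a + b)" "a \<in> F x" "b \<in> G x" unfolding scal_comp_def by auto
  moreover from this have "ys (m x) \<le> ys a" "ys (n x) \<le> ys b" using m(2) n(2) by simp_all
  ultimately show "ys (m x) + ys (n x) \<le> c" using linear_add[OF ys, of a b] by linarith
qed

section \<open>Subdifferentials\<close>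

lemma subdiff_scalarization:
  fixes ys :: "'b::real_normed_vector \<Rightarrow> real" and F :: "'a::real_normed_vector \<Rightarrow> 'b set"
  assumes ys: "ys \<in> dual_cone K" and K0: "0 \<in> K" and T: "T \<in> subdiff K F xb"
  shows "ys \<circ> T \<in> subdiff {0..} (scal_comp ys F) xb"
proof -
  have ys_lin: "bounded_linear ys" and pos: "\<And>k. k \<in> K \<Longrightarrow> 0 \<le> ys k"
    using ys unfolding dual_cone_def by auto
  obtain C where C: "C > 0" "\<And>y. norm (ys y) \<le> norm y * C"
    using bounded_linear.pos_bounded[OF ys_lin] by blast
  have T_lin: "bounded_linear T"
    and T_loc: "\<forall>\<epsilon>>0. \<exists>\<delta>>0. \<forall>x\<in>ball xb \<delta>. {a + k | a k. a \<in> F x \<and> k \<in> K} \<subseteq>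
       {b + k + T (x - xb) + d | b k d. b \<in> F xb \<and> k \<in> K \<and> norm d \<le> \<epsilon> * norm (x - xb)}"
    using T unfolding subdiff_def mem_Collect_eq by (rule conjunct1, rule conjunct2)
  show ?thesis
    unfolding subdiff_def
  proof (intro CollectI conjI allI impI)
    show "bounded_linear (ys \<circ> T)" using bounded_linear_compose[OF ys_lin T_lin] by (simp add: comp_def)
    fix e :: real assume e: "e > 0"
    then have "e / C > 0" using C(1) by simp
    then obtain \<delta> where \<delta>: "\<delta> > 0" and incl: "\<forall>x\<in>ball xb \<delta>.
        {a + k | a k. a \<in> F x \<and> k \<in> K} \<subseteq>
        {b + k + T (x - xb) + d | b k d. b \<in> F xb \<and> k \<in> K \<and> norm d \<le> e / C * norm (x - xb)}"
      using T_loc by blast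
    have "z \<in> {b + k + (ys \<circ> T) (x - xb) + d | b k d. b \<in> scal_comp ys F xb \<and> k \<in> {0..} \<and>
          norm d \<le> e * norm (x - xb)}"
      if x: "x \<in> ball xb \<delta>" and z: "z \<in> {a + k | a k. a \<in> scal_comp ys F x \<and> k \<in> {0..}}" for x z
    proof -
      obtain a s where z_eq: "z = ys a + s" and a: "a \<in> F x" and s: "s \<ge> 0"
        using z unfolding scal_comp_def by auto
      have "a + 0 \<in> {a + k | a k. a \<in> F x \<and> k \<in> K}" using a K0 by blast
      then obtain b k d where abkd: "a + 0 = b + k + T (x - xb) + d" and b: "b \<in> F xb"
        and k: "k \<in> K" and d: "norm d \<le> e / C * norm (x - xb)"
        using incl x by blast
      have "ys a = ys b + ys k + ys (T (x - xb)) + ys d"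
        using arg_cong[OF abkd, of ys] bounded_linear.linear[OF ys_lin] by (simp add: linear_add)
      moreover have "norm (ys d) \<le> e * norm (x - xb)"
      proof -
        have "norm (ys d) \<le> norm d * C" by (rule C(2))
        also have "\<dots> \<le> e / C * norm (x - xb) * C" using d C(1) by (intro mult_right_mono) auto
        finally show ?thesis using C(1) by simp
      qed
      ultimately have "z = ys b + (ys k + s) + (ys \<circ> T) (x - xb) + ys d \<and> ys b \<in> scal_comp ys F xb
          \<and> ys k + s \<in> {0..} \<and> norm (ys d) \<le> e * norm (x - xb)"
        using z_eq b pos[OF k] s unfolding scal_comp_def by auto
      then show ?thesis by blast
    qed
    then show "\<exists>\<delta>>0. \<forall>x\<in>ball xb \<delta>. {a + k | a k. a \<in> scal_comp ys F x \<and> k \<in> {0..}} \<subseteq>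
        {b + k + (ys \<circ> T) (x - xb) + d | b k d. b \<in> scal_comp ys F xb \<and> k \<in> {0..} \<and>
          norm d \<le> e * norm (x - xb)}"
      using \<delta> by blast
  qed
qed

lemma subdiff_min_value_local:
  fixes G :: "'a::real_normed_vector \<Rightarrow> real set"
  assumes T: "T \<in> subdiff {0..} G xb"
    and p: "\<And>x. p x \<in> G x" and min: "\<And>x a. a \<in> G x \<Longrightarrow> p x \<le> a"
    and e: "e > 0"
  shows "\<exists>\<delta>>0. \<forall>x\<in>ball xb \<delta>. p xb + T (x - xb) - e * norm (x - xb) \<le> p x"
proof -
  have "\<forall>\<epsilon>>0. \<exists>\<delta>>0. \<forall>x\<in>ball xb \<delta>. {a + k | a k. a \<in> G x \<and> k \<in> {0..}} \<subseteq>
       {b + k + T (x - xb) + d | b k d. b \<in> G xb \<and> k \<in> {0..} \<and> norm d \<le> \<epsilon> * norm (x - xb)}"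
    using T unfolding subdiff_def mem_Collect_eq by (rule conjunct2)
  then obtain \<delta> where \<delta>: "\<delta> > 0" and incl: "\<forall>x\<in>ball xb \<delta>.
      {a + k | a k. a \<in> G x \<and> k \<in> {0..}} \<subseteq>
      {b + k + T (x - xb) + d | b k d. b \<in> G xb \<and> k \<in> {0..} \<and> norm d \<le> e * norm (x - xb)}"
    using e by blast
  have "p xb + T (x - xb) - e * norm (x - xb) \<le> p x" if x: "x \<in> ball xb \<delta>" for x
  proof -
    have "p x + 0 \<in> {a + k | a k. a \<in> G x \<and> k \<in> {0..}}" using p by blast
    then obtain b k d where "p x + 0 = b + k + T (x - xb) + d" "b \<in> G xb" "k \<ge> 0"
      "norm d \<le> e * norm (x - xb)"
      using incl x by blast
    then show ?thesis using min[of b xb] by (auto simp: abs_le_iff)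
  qed
  with \<delta> show ?thesis by blast
qed

lemma subdiff_convex_min_value_global:
  fixes G :: "'a::real_normed_vector \<Rightarrow> real set"
  assumes T: "T \<in> subdiff {0..} G xb"
    and p: "\<And>x. p x \<in> G x" "\<And>x a. a \<in> G x \<Longrightarrow> p x \<le> a"
    and convex: "convex_on UNIV p"
  shows "p xb + T (x - xb) \<le> p x"
proof (rule convex_local_subgradient_imp_global[OF convex])
  show "linear T" using T unfolding subdiff_def by (simp add: bounded_linear.linear)
qed (rule subdiff_min_value_local[OF T p])

lemma global_minorant_in_subdiff:
  fixes G :: "'a::real_normed_vector \<Rightarrow> real set"
  assumes T: "bounded_linear T" and p: "p \<in> G xb"
    and minorant: "\<And>x a. a \<in> G x \<Longrightarrow> p + T (x - xb) \<le> a"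
  shows "T \<in> subdiff {0..} G xb"
  unfolding subdiff_def
proof (intro CollectI conjI T allI impI)
  fix e :: real assume "e > 0"
  show "\<exists>\<delta>>0. \<forall>x\<in>ball xb \<delta>. {a + k | a k. a \<in> G x \<and> k \<in> {0..}} \<subseteq>
      {b + k + T (x - xb) + d | b k d. b \<in> G xb \<and> k \<in> {0..} \<and> norm d \<le> e * norm (x - xb)}"
  proof (intro exI[of _ 1] conjI ballI subsetI)
    fix x z assume "z \<in> {a + k | a k. a \<in> G x \<and> k \<in> {0..}}"
    then obtain a k where "z = a + k" "a \<in> G x" "k \<ge> 0" by auto
    with minorant[of a x] \<open>e > 0\<close>
    have "z = p + (a + k - p - T (x - xb)) + T (x - xb) + 0 \<and> p \<in> G xb
        \<and> a + k - p - T (x - xb) \<in> {0..} \<and> norm (0::real) \<le> e * norm (x - xb)"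
      using p by auto
    then show "z \<in> {b + k + T (x - xb) + d | b k d. b \<in> G xb \<and> k \<in> {0..} \<and> norm d \<le> e * norm (x - xb)}"
      by blast
  qed simp
qed

lemma min_value_subgradient_in_subdiff:
  fixes ys :: "'b \<Rightarrow> real" and F :: "'a::real_normed_vector \<Rightarrow> 'b set"
  assumes L: "bounded_linear L" and m: "\<And>x. m x \<in> F x"
    and min: "\<And>x b. b \<in> F x \<Longrightarrow> ys (m x) \<le> ys b"
    and subgradient: "\<And>x. ys (m xb) + L (x - xb) \<le> ys (m x)"
  shows "L \<in> subdiff {0..} (scal_comp ys F) xb"
proof (rule global_minorant_in_subdiff[OF L])
  show "ys (m xb) \<in> scal_comp ys F xb" unfolding scal_comp_def using m by blast
  fix x a assume "a \<in> scal_comp ys F x"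
  then show "ys (m xb) + L (x - xb) \<le> a"
    unfolding scal_comp_def using subgradient[of x] min by force
qed

theorem mainTheorem7:
  fixes K :: "'b::real_normed_vector set"
    and F1 F2 :: "'a::real_normed_vector \<Rightarrow> 'b set"
  assumes K: "pointed_closed_convex_cone K"
    and ne1: "\<forall>x. F1 x \<noteq> {}" and ne2: "\<forall>x. F2 x \<noteq> {}"
    and cvx1: "upper_K_convex K F1" and cvx2: "upper_K_convex K F2"
    and cpt1: "\<forall>x. K_seq_compact K (F1 x)" and cpt2: "\<forall>x. K_seq_compact K (F2 x)"
    and reg: "(\<exists>x0. sv_continuous_at F1 x0) \<or> (\<exists>x0. sv_continuous_at F2 x0)
              \<or> finite_dim_space TYPE('a)"
  shows "\<forall>xb. \<forall>ys \<in> dual_cone K - {\<lambda>_. 0}.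
           (\<lambda>T. ys \<circ> T) ` subdiff K (\<lambda>x. {a + b | a b. a \<in> F1 x \<and> b \<in> F2 x}) xb
           \<subseteq> {(\<lambda>x. T1 x + T2 x) | T1 T2.
                 T1 \<in> subdiff {0..} (scal_comp ys F1) xb \<and>
                 T2 \<in> subdiff {0..} (scal_comp ys F2) xb}"
proof (intro allI ballI subsetI)
  fix xb ys S
  assume ys: "ys \<in> dual_cone K - {\<lambda>_. 0}"
    and "S \<in> (\<lambda>T. ys \<circ> T) ` subdiff K (\<lambda>x. {a + b | a b. a \<in> F1 x \<and> b \<in> F2 x}) xb"
  moreover have "0 \<in> K" using K unfolding pointed_closed_convex_cone_def by blast
  ultimately have S: "S \<in> subdiff {0..} (scal_comp ys (\<lambda>x. {a + b | a b. a \<in> F1 x \<and> b \<in> F2 x})) xb"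
    using subdiff_scalarization by blast
  have ys_lin: "bounded_linear ys" and pos: "\<And>k. k \<in> K \<Longrightarrow> 0 \<le> ys k"
    using ys unfolding dual_cone_def by auto
  obtain m1 where m1: "\<And>x. m1 x \<in> F1 x" "\<And>x b. b \<in> F1 x \<Longrightarrow> ys (m1 x) \<le> ys b"
    using minimizer_selection[OF ys_lin pos] cpt1 by metis
  obtain m2 where m2: "\<And>x. m2 x \<in> F2 x" "\<And>x b. b \<in> F2 x \<Longrightarrow> ys (m2 x) \<le> ys b"
    using minimizer_selection[OF ys_lin pos] cpt2 by metis
  have convex: "convex_on UNIV (\<lambda>x. ys (m1 x))" "convex_on UNIV (\<lambda>x. ys (m2 x))"
    using convex_on_min_value[OF _ bounded_linear.linear[OF ys_lin] pos] cvx1 cvx2 m1 m2 by blast+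
  have "bounded_linear S" using S unfolding subdiff_def by simp
  moreover have "ys (m1 xb) + ys (m2 xb) + S (x - xb) \<le> ys (m1 x) + ys (m2 x)" for x
    using subdiff_convex_min_value_global[OF S min_value_of_sum[where F = F1 and G = F2,
          OF bounded_linear.linear[OF ys_lin] m1 m2] convex_on_add[OF convex]] .
  moreover have "bounded_above_on_ball (\<lambda>x. ys (m1 x)) \<or> bounded_above_on_ball (\<lambda>x. ys (m2 x))
      \<or> finite_dim_space TYPE('a)"
    using reg lower_continuous_min_value_bounded_above[of F1 _ ys m1]
      lower_continuous_min_value_bounded_above[of F2 _ ys m2] ys_lin m1(2) m2(2) ne1 ne2
    unfolding sv_continuous_at_def by blast
  ultimately obtain L1 L2 where "\<And>x. S x = L1 x + L2 x"
    "L1 \<in> subdiff {0..} (scal_comp ys F1) xb" "L2 \<in> subdiff {0..} (scal_comp ys F2) xb"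
    using convex_subgradient_sum_rule[OF convex] min_value_subgradient_in_subdiff m1 m2 by metis
  then show "S \<in> {(\<lambda>x. T1 x + T2 x) | T1 T2. T1 \<in> subdiff {0..} (scal_comp ys F1) xb \<and>
      T2 \<in> subdiff {0..} (scal_comp ys F2) xb}"
    by fastforce
qed

end
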